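(* Define: (a) $a_n$ ($n\ge0$) as the number of letters of $P_1^n(\mathtt L)$, where $P_1$ is the letterwise substitution $\mathtt R\mapsto\mathtt{Rr}$, $\mathtt r\mapsto\mathtt S$, $\mathtt L\mapsto\mathtt S$, $\mathtt l\mapsto\mathtt{Ll}$, $\mathtt S\mapsto\mathtt{Rl}$, $\mathtt s\mapsto\mathtt{Lr}$; (b) $b_n$ ($n\ge1$) by $\frac{x(1+x^2)}{1-x-2x^3}=\sum_{n\ge1}b_nx^n$; (c) $c_n=|S_n|$ for $n\ge1$, where $S_n$ is the set of binary sequences of length $n$ with no maximal run of zeros of length $\equiv1\pmod 3$, and $c_0:=1$; (d) $d_n=|A_n|$ for $n\ge1$, where $A_n$ is the set of $n\times2$ arrays over $\{0,1,2\}$ in which every $1$ has a $0$ immediately to its left or above it, no $0$ has a $0$ immediately to its left or above it, and every $2$ has in its column a $1$ immediately above it and a $0$ immediately above that. Then for all $n\ge0$, $$a_n=b_{n+1}=c_n=d_{n+1}.$$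
   Context: $a_n$ is the length of the right side boundary of the polyomino $\mathcal S_n$ containing the $n$-th Harter–Heighway dragon curve. The sequences begin $1,1,2,4,6,10,\dots$ (for $a_0,a_1,\ldots$). *)

theory Defs
  imports Complex_Main "HOL-Computational_Algebra.Formal_Power_Series"
begin

datatype dletter = DR | Dr | DL | Dl | DS | Ds

fun P1 :: "dletter \<Rightarrow> dletter list" where
  "P1 DR = [DR, Dr]"
| "P1 Dr = [DS]"
| "P1 DL = [DS]"
| "P1 Dl = [DL, Dl]"
| "P1 DS = [DR, Dl]"
| "P1 Ds = [DL, Dr]"

definition P1_word :: "dletter list \<Rightarrow> dletter list" where
  "P1_word w = concat (map P1 w)"

definition seq_a :: "nat \<Rightarrow> nat" where
  "seq_a n = length ((P1_word ^^ n) [DL])"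

definition gf_b :: "rat fps" where
  "gf_b = fps_X * (1 + fps_X ^ 2) / (1 - fps_X - 2 * fps_X ^ 3)"

definition seq_b :: "nat \<Rightarrow> rat" where
  "seq_b n = fps_nth gf_b n"

definition max_zero_run :: "nat list \<Rightarrow> nat \<Rightarrow> nat \<Rightarrow> bool" where
  "max_zero_run w i k \<longleftrightarrow> 1 \<le> k \<and> i + k \<le> length w
     \<and> (\<forall>j. i \<le> j \<and> j < i + k \<longrightarrow> w ! j = 0)
     \<and> (i = 0 \<or> w ! (i - 1) \<noteq> 0)
     \<and> (i + k = length w \<or> w ! (i + k) \<noteq> 0)"

definition set_S :: "nat \<Rightarrow> nat list set" where
  "set_S n = {w. length w = n \<and> set w \<subseteq> {0, 1}
                 \<and> \<not> (\<exists>i k. max_zero_run w i k \<and> k mod 3 = 1)}"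

definition seq_c :: "nat \<Rightarrow> nat" where
  "seq_c n = (if n = 0 then 1 else card (set_S n))"

text \<open>An array is a list of n rows, each a list of 2 entries; entry \<open>A ! i ! j\<close>
  is in row i (rows numbered top to bottom) and column j (left to right).
  "Left of (i,j)" is (i,j-1), "above (i,j)" is (i-1,j).\<close>
definition array_ok :: "nat list list \<Rightarrow> bool" where
  "array_ok A \<longleftrightarrow>
     (\<forall>i < length A. \<forall>j < 2.
        (A ! i ! j = 1 \<longrightarrow> (0 < j \<and> A ! i ! (j - 1) = 0) \<or> (0 < i \<and> A ! (i - 1) ! j = 0))
      \<and> (A ! i ! j = 0 \<longrightarrow> \<not> (0 < j \<and> A ! i ! (j - 1) = 0) \<and> \<not> (0 < i \<and> A ! (i - 1) ! j = 0))
      \<and> (A ! i ! j = 2 \<longrightarrow> 2 \<le> i \<and> A ! (i - 1) ! j = 1 \<and> A ! (i - 2) ! j = 0))"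

definition set_A :: "nat \<Rightarrow> nat list list set" where
  "set_A n = {A. length A = n \<and> (\<forall>row \<in> set A. length row = 2 \<and> set row \<subseteq> {0, 1, 2})
                 \<and> array_ok A}"

definition seq_d :: "nat \<Rightarrow> nat" where
  "seq_d n = card (set_A n)"

end

theory Submission
  imports Defs
begin

(*
  All four sequences satisfy u (n + 3) = u (n + 2) + 2 u n with initial values 1, 1, 2.

  (a) Let |x|_n be the length of P1^n(x).  Then |L|_(n+1) = |S|_n, |S|_(n+1) = |R|_n + |l|_n,
  |R|_(n+1) = |R|_n + |r|_n, |l|_(n+1) = |L|_n + |l|_n and |r|_n = |L|_n, which combine to
  |L|_(n+3) = |L|_(n+2) + 2 |L|_n.

  (b) Compare coefficients in gf_b (1 - x - 2 x^3) = x (1 + x^2).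

  (c) A letter 1 separates the maximal zero runs of a word, so appending 1 or 100 adds no
  run or a run of length 2, appending 10 adds a forbidden run of length 1, and appending 000
  lengthens the last zero run by 3 without changing its residue.  Hence the admissible words
  of length n + 3 are those of length n + 2 followed by 1 and those of length n followed by
  000 or 100.

  (d) Once an array has two rows, whether a further row may be appended depends only on
  its last two rows.  The pairs of last rows that actually occur form a 10-state automaton,
  and its transfer equations give the recurrence.
*)

fun dragon_seq :: "nat \<Rightarrow> nat" where
  "dragon_seq 0 = 1"
| "dragon_seq (Suc 0) = 1"
| "dragon_seq (Suc (Suc 0)) = 2"
| "dragon_seq (Suc (Suc (Suc n))) = dragon_seq (Suc (Suc n)) + 2 * dragon_seq n"

lemma dragon_seq_unique:
  fixes f :: "nat \<Rightarrow> 'a::semiring_1"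
  assumes "f 0 = 1" "f 1 = 1" "f 2 = 2" and rec: "\<And>n. f (n + 3) = f (n + 2) + 2 * f n"
  shows "f n = of_nat (dragon_seq n)"
proof (induction n rule: dragon_seq.induct)
  case (4 n)
  then show ?case using rec[of n] by (simp add: eval_nat_numeral mult_2)
qed (use assms in \<open>simp_all add: eval_nat_numeral\<close>)

section \<open>The substitution P1\<close>

lemma P1_iter_append: "(P1_word ^^ n) (u @ w) = (P1_word ^^ n) u @ (P1_word ^^ n) w"
  by (induction n) (simp_all add: P1_word_def)

definition letter_len :: "dletter \<Rightarrow> nat \<Rightarrow> nat" where
  "letter_len x n = length ((P1_word ^^ n) [x])"

lemma length_P1_iter: "length ((P1_word ^^ n) w) = (\<Sum>x\<leftarrow>w. letter_len x n)"
proof (induction w)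
  case Nil
  show ?case by (induction n) (simp_all add: P1_word_def)
next
  case (Cons x w)
  then show ?case using P1_iter_append[of n "[x]" w] by (simp add: letter_len_def)
qed

lemma letter_len_0: "letter_len x 0 = 1"
  by (simp add: letter_len_def)

lemma letter_len_Suc: "letter_len x (Suc n) = (\<Sum>y\<leftarrow>P1 x. letter_len y n)"
proof -
  have "(P1_word ^^ Suc n) [x] = (P1_word ^^ n) (P1 x)"
    by (simp only: funpow_Suc_right o_apply) (simp add: P1_word_def)
  then show ?thesis by (simp only: letter_len_def[of x] length_P1_iter)
qed

lemma letter_len_r_eq_L: "letter_len Dr n = letter_len DL n"
  by (cases n) (simp_all add: letter_len_0 letter_len_Suc)

lemma seq_a_rec: "seq_a (n + 3) = seq_a (n + 2) + 2 * seq_a n"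
proof -
  have "seq_a m = letter_len DL m" for m by (simp add: seq_a_def letter_len_def)
  then show ?thesis
    by (simp add: eval_nat_numeral letter_len_Suc letter_len_r_eq_L)
qed

lemma seq_a_initial: "seq_a 0 = 1" "seq_a 1 = 1" "seq_a 2 = 2"
  by (simp_all add: seq_a_def P1_word_def eval_nat_numeral)

lemma seq_a_eq_dragon_seq: "seq_a n = dragon_seq n"
  using dragon_seq_unique[of seq_a] seq_a_initial seq_a_rec by simp

section \<open>The generating function\<close>

lemma gf_b_fixpoint:
  "gf_b = fps_X + fps_X ^ 3 + fps_X * gf_b + fps_const 2 * (fps_X ^ 3 * gf_b)"
proof -
  have "fps_nth (1 - fps_X - 2 * fps_X ^ 3 :: rat fps) 0 \<noteq> 0" by simp
  then have "gf_b * (1 - fps_X - 2 * fps_X ^ 3) = fps_X * (1 + fps_X ^ 2)"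
    unfolding gf_b_def by (simp add: fps_divide_unit mult.assoc inverse_mult_eq_1)
  then show ?thesis
    by (simp add: algebra_simps power3_eq_cube power2_eq_square numeral_fps_const[symmetric])
qed

lemma seq_b_initial: "seq_b 1 = 1" "seq_b 2 = 1" "seq_b 3 = 2"
  and seq_b_rec: "seq_b (n + 3 + 1) = seq_b (n + 2 + 1) + 2 * seq_b (n + 1)"
proof -
  have coeff: "seq_b k = (if k = 1 then 1 else 0) + (if k = 3 then 1 else 0)
      + (if k = 0 then 0 else seq_b (k - 1)) + 2 * (if k < 3 then 0 else seq_b (k - 3))" for k
    unfolding seq_b_def
    by (subst gf_b_fixpoint) (simp add: fps_mult_left_const_nth fps_X_power_mult_nth fps_X_power_nth)
  have "seq_b 0 = 0" using coeff[of 0] by simp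
  then show "seq_b 1 = 1" "seq_b 2 = 1" "seq_b 3 = 2"
    using coeff[of 1] coeff[of 2] coeff[of 3] by simp_all
  show "seq_b (n + 3 + 1) = seq_b (n + 2 + 1) + 2 * seq_b (n + 1)"
    using coeff[of "n + 4"] by (simp add: eval_nat_numeral)
qed

lemma seq_b_eq_dragon_seq: "seq_b (n + 1) = of_nat (dragon_seq n)"
proof (rule dragon_seq_unique[of "\<lambda>n. seq_b (n + 1)"])
  show "seq_b (n + 3 + 1) = seq_b (n + 2 + 1) + 2 * seq_b (n + 1)" for n
    by (rule seq_b_rec)
qed (use seq_b_initial in \<open>simp_all add: eval_nat_numeral\<close>)

section \<open>Binary words without maximal zero runs of length 1 mod 3\<close>

lemma all_shift_interval:
  fixes m i k :: nat
  shows "(\<forall>j. m + i \<le> j \<and> j < m + i + k \<longrightarrow> P j) \<longleftrightarrow>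
         (\<forall>j. i \<le> j \<and> j < i + k \<longrightarrow> P (m + j))"
  (is "?L \<longleftrightarrow> ?R")
proof
  assume R: ?R
  show ?L
  proof (intro allI impI)
    fix j assume "m + i \<le> j \<and> j < m + i + k"
    then have "i \<le> j - m \<and> j - m < i + k" and "m + (j - m) = j" by auto
    with R show "P j" by metis
  qed
qed auto

lemma max_zero_run_not_across:
  assumes "c \<noteq> 0" "max_zero_run (v @ c # y) i k"
  shows "i + k \<le> length v \<or> length v < i"
  using assms unfolding max_zero_run_def
  by (metis (no_types, lifting) le_neq_implies_less nat_le_linear nth_append_length)

lemma max_zero_run_append_left:
  assumes "c \<noteq> 0" "i + k \<le> length v"
  shows "max_zero_run (v @ c # y) i k \<longleftrightarrow> max_zero_run v i k"
  using assms unfolding max_zero_run_def by (auto simp: nth_append)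

lemma max_zero_run_append_right:
  assumes "c \<noteq> 0"
  shows "max_zero_run (v @ c # y) (Suc (length v) + i) k \<longleftrightarrow> max_zero_run y i k"
  using assms unfolding max_zero_run_def all_shift_interval by (auto simp: nth_append nth_Cons')

definition zero_runs :: "nat list \<Rightarrow> nat set" where
  "zero_runs w = {k. \<exists>i. max_zero_run w i k}"

lemma zero_runs_append_Cons:
  assumes "c \<noteq> 0"
  shows "zero_runs (v @ c # y) = zero_runs v \<union> zero_runs y"
proof (intro equalityI subsetI)
  fix k assume "k \<in> zero_runs (v @ c # y)"
  then obtain i where run: "max_zero_run (v @ c # y) i k" by (auto simp: zero_runs_def)
  from max_zero_run_not_across[OF assms run] show "k \<in> zero_runs v \<union> zero_runs y"
  proof
    assume "i + k \<le> length v"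
    then show ?thesis using run max_zero_run_append_left[OF assms] by (auto simp: zero_runs_def)
  next
    assume "length v < i"
    then obtain i' where "i = Suc (length v) + i'" using less_imp_Suc_add by fastforce
    then show ?thesis using run max_zero_run_append_right[OF assms] by (auto simp: zero_runs_def)
  qed
next
  fix k assume "k \<in> zero_runs v \<union> zero_runs y"
  then obtain i where "max_zero_run v i k \<or> max_zero_run y i k" by (auto simp: zero_runs_def)
  then have "max_zero_run (v @ c # y) i k \<or> max_zero_run (v @ c # y) (Suc (length v) + i) k"
    using max_zero_run_append_left[OF assms] max_zero_run_append_right[OF assms]
    by (auto simp: max_zero_run_def[of v])
  then show "k \<in> zero_runs (v @ c # y)" by (auto simp: zero_runs_def)
qed

lemma zero_runs_replicate: "zero_runs (replicate n 0) = (if n = 0 then {} else {n})"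
proof -
  have "max_zero_run (replicate n 0) i k \<longleftrightarrow> i = 0 \<and> k = n \<and> 1 \<le> n" for i k
    by (cases "k < n") (auto simp: max_zero_run_def)
  then show ?thesis by (auto simp: zero_runs_def)
qed

lemma zero_runs_append_zeros:
  "\<exists>X m. \<forall>l. zero_runs (v @ replicate l 0) = X \<union> zero_runs (replicate (m + l) 0)"
proof (cases "\<exists>c \<in> set v. c \<noteq> 0")
  case True
  from split_list_last_prop[OF this] obtain u c zs
    where v: "v = u @ c # zs" and c: "c \<noteq> 0" and "\<forall>z \<in> set zs. \<not> z \<noteq> 0"
    by blast
  then have "v = u @ c # replicate (length zs) 0" by (simp add: replicate_eqI)
  then have "zero_runs (v @ replicate l 0) =
      zero_runs u \<union> zero_runs (replicate (length zs + l) 0)" for l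
    by (simp add: replicate_add zero_runs_append_Cons[OF c])
  then show ?thesis by blast
next
  case False
  then have "v @ replicate l 0 = replicate (length v + l) 0" for l
    by (simp add: replicate_add replicate_eqI)
  then show ?thesis by auto
qed

definition has_run_1_mod_3 :: "nat list \<Rightarrow> bool" where
  "has_run_1_mod_3 w \<longleftrightarrow> (\<exists>k \<in> zero_runs w. k mod 3 = 1)"

lemma has_run_1_mod_3_append_Cons:
  "c \<noteq> 0 \<Longrightarrow> has_run_1_mod_3 (v @ c # y) \<longleftrightarrow> has_run_1_mod_3 v \<or> has_run_1_mod_3 y"
  by (auto simp: has_run_1_mod_3_def zero_runs_append_Cons)

lemma has_run_1_mod_3_replicate: "has_run_1_mod_3 (replicate n 0) \<longleftrightarrow> n mod 3 = 1"
  by (auto simp: has_run_1_mod_3_def zero_runs_replicate)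

lemma has_run_1_mod_3_snoc: "c \<noteq> 0 \<Longrightarrow> has_run_1_mod_3 (v @ [c]) \<longleftrightarrow> has_run_1_mod_3 v"
  using has_run_1_mod_3_append_Cons[of c v "[]"] has_run_1_mod_3_replicate[of 0] by simp

lemma has_run_1_mod_3_append_10: "c \<noteq> 0 \<Longrightarrow> has_run_1_mod_3 (v @ [c, 0])"
  using has_run_1_mod_3_append_Cons[of c v "[0]"] has_run_1_mod_3_replicate[of 1] by simp

lemma has_run_1_mod_3_append_100:
  "c \<noteq> 0 \<Longrightarrow> has_run_1_mod_3 (v @ [c, 0, 0]) \<longleftrightarrow> has_run_1_mod_3 v"
  using has_run_1_mod_3_append_Cons[of c v "[0, 0]"] has_run_1_mod_3_replicate[of 2]
  by (simp add: numeral_2_eq_2)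

lemma has_run_1_mod_3_append_000: "has_run_1_mod_3 (v @ [0, 0, 0]) \<longleftrightarrow> has_run_1_mod_3 v"
proof -
  obtain X m
    where runs: "\<And>l. zero_runs (v @ replicate l 0) = X \<union> zero_runs (replicate (m + l) 0)"
    using zero_runs_append_zeros by blast
  have "zero_runs (v @ [0, 0, 0]) = X \<union> {m + 3}"
    using runs[of 3, unfolded zero_runs_replicate] by (simp add: numeral_3_eq_3)
  moreover have "zero_runs v = X \<union> (if m = 0 then {} else {m})"
    using runs[of 0, unfolded zero_runs_replicate] by simp
  ultimately show ?thesis by (auto simp: has_run_1_mod_3_def)
qed

lemma set_S_eq: "set_S n = {w. length w = n \<and> set w \<subseteq> {0, 1} \<and> \<not> has_run_1_mod_3 w}"
  unfolding set_S_def has_run_1_mod_3_def zero_runs_def by blast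

lemma finite_set_S: "finite (set_S n)"
proof (rule finite_subset)
  show "set_S n \<subseteq> {w. set w \<subseteq> {0, 1} \<and> length w = n}" by (auto simp: set_S_eq)
qed (simp add: finite_lists_length_eq)

lemma set_S_Suc3:
  "set_S (n + 3) = (\<lambda>v. v @ [1]) ` set_S (n + 2)
     \<union> (\<lambda>v. v @ [0, 0, 0]) ` set_S n \<union> (\<lambda>v. v @ [1, 0, 0]) ` set_S n"
  (is "_ = ?E1 \<union> ?E000 \<union> ?E100")
proof (intro equalityI subsetI)
  fix w assume w: "w \<in> set_S (n + 3)"
  then obtain v a b c where wv: "w = v @ [a, b, c]" and len: "length v = n"
    by (auto simp: set_S_eq numeral_3_eq_3 length_Suc_conv_rev)
  from w wv have v01: "set v \<subseteq> {0, 1}" and abc: "a \<in> {0, 1}" "b \<in> {0, 1}" "c \<in> {0, 1}"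
    and ok: "\<not> has_run_1_mod_3 (v @ [a, b, c])"
    by (auto simp: set_S_eq)
  from abc consider "c = 1" | "b = 1" "c = 0" | "a = 1" "b = 0" "c = 0" | "a = 0" "b = 0" "c = 0"
    by auto
  then show "w \<in> ?E1 \<union> ?E000 \<union> ?E100"
  proof cases
    case 1
    with ok abc have "v @ [a, b] \<in> set_S (n + 2)"
      using has_run_1_mod_3_snoc[of 1 "v @ [a, b]"] v01 len by (auto simp: set_S_eq)
    with 1 wv show ?thesis by auto
  next
    case 2
    with ok show ?thesis using has_run_1_mod_3_append_10[of 1 "v @ [a]"] by simp
  next
    case 3
    with ok have "v \<in> set_S n"
      using has_run_1_mod_3_append_100[of 1 v] v01 len by (simp add: set_S_eq)
    with 3 wv show ?thesis by auto
  next
    case 4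
    with ok have "v \<in> set_S n"
      using has_run_1_mod_3_append_000[of v] v01 len by (simp add: set_S_eq)
    with 4 wv show ?thesis by auto
  qed
next
  fix w assume "w \<in> ?E1 \<union> ?E000 \<union> ?E100"
  then show "w \<in> set_S (n + 3)"
    using has_run_1_mod_3_snoc[of 1] has_run_1_mod_3_append_000 has_run_1_mod_3_append_100[of 1]
    by (auto simp: set_S_eq)
qed

lemma card_set_S_rec: "card (set_S (n + 3)) = card (set_S (n + 2)) + 2 * card (set_S n)"
proof -
  have inj: "inj_on (\<lambda>v. v @ s) X" for s :: "nat list" and X by (simp add: inj_on_def)
  have distinct_endings: "v @ [1] \<noteq> u @ [0, 0, 0]" "v @ [1] \<noteq> u @ [1, 0, 0]"
    "v @ [0, 0, 0] \<noteq> u @ [1, 0, 0]" for u v :: "nat list"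
    by (auto dest: arg_cong[of _ _ rev])
  let ?E1 = "(\<lambda>v. v @ [1]) ` set_S (n + 2)"
  let ?E000 = "(\<lambda>v. v @ [0, 0, 0]) ` set_S n" and ?E100 = "(\<lambda>v. v @ [1, 0, 0]) ` set_S n"
  have "card (set_S (n + 3)) = card (?E1 \<union> (?E000 \<union> ?E100))"
    by (simp add: set_S_Suc3 Un_assoc)
  also have "\<dots> = card ?E1 + card (?E000 \<union> ?E100)"
    by (rule card_Un_disjoint) (use distinct_endings in \<open>auto simp: finite_set_S\<close>)
  also have "card (?E000 \<union> ?E100) = card ?E000 + card ?E100"
    by (rule card_Un_disjoint) (use distinct_endings in \<open>auto simp: finite_set_S\<close>)
  finally show ?thesis by (simp add: card_image[OF inj])
qed

lemma card_set_S_initial: "card (set_S 0) = 1" "card (set_S 1) = 1" "card (set_S 2) = 2"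
proof -
  have "set_S 0 = {[]}" "set_S 1 = {[1]}" "set_S 2 = {[0, 0], [1, 1]}"
    using has_run_1_mod_3_replicate[of 0] has_run_1_mod_3_replicate[of 1]
      has_run_1_mod_3_replicate[of 2] has_run_1_mod_3_snoc[of 1 "[]"]
      has_run_1_mod_3_snoc[of 1 "[1]"] has_run_1_mod_3_snoc[of 1 "[0]"]
      has_run_1_mod_3_append_10[of 1 "[]"]
    by (auto simp: set_S_eq length_Suc_conv numeral_2_eq_2)
  then show "card (set_S 0) = 1" "card (set_S 1) = 1" "card (set_S 2) = 2" by simp_all
qed

lemma seq_c_eq_dragon_seq: "seq_c n = dragon_seq n"
proof -
  have "card (set_S n) = dragon_seq n"
    using dragon_seq_unique[of "\<lambda>n. card (set_S n)"] card_set_S_initial card_set_S_rec by simp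
  then show ?thesis using card_set_S_initial by (simp add: seq_c_def)
qed

section \<open>Arrays\<close>

definition cell_ok :: "nat list list \<Rightarrow> nat \<Rightarrow> nat \<Rightarrow> bool" where
  "cell_ok A i j \<longleftrightarrow>
        (A ! i ! j = 1 \<longrightarrow> (0 < j \<and> A ! i ! (j - 1) = 0) \<or> (0 < i \<and> A ! (i - 1) ! j = 0))
      \<and> (A ! i ! j = 0 \<longrightarrow> \<not> (0 < j \<and> A ! i ! (j - 1) = 0) \<and> \<not> (0 < i \<and> A ! (i - 1) ! j = 0))
      \<and> (A ! i ! j = 2 \<longrightarrow> 2 \<le> i \<and> A ! (i - 1) ! j = 1 \<and> A ! (i - 2) ! j = 0)"

definition fits_below :: "nat list list \<Rightarrow> nat list \<Rightarrow> bool" where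
  "fits_below B r \<longleftrightarrow> (\<forall>j < 2. cell_ok (B @ [r]) (length B) j)"

lemma array_ok_snoc: "array_ok (B @ [r]) \<longleftrightarrow> array_ok B \<and> fits_below B r"
proof -
  have "cell_ok (B @ [r]) i j = cell_ok B i j" if "i < length B" for i j
    using that by (simp add: cell_ok_def nth_append)
  then show ?thesis
    unfolding array_ok_def fits_below_def cell_ok_def[symmetric]
    by (auto simp: less_Suc_eq)
qed

definition is_row :: "nat list \<Rightarrow> bool" where
  "is_row r \<longleftrightarrow> length r = 2 \<and> set r \<subseteq> {0, 1, 2}"

definition all_rows :: "nat list list" where
  "all_rows = [[0,0], [0,1], [0,2], [1,0], [1,1], [1,2], [2,0], [2,1], [2,2]]"

lemma is_row_iff_in_all_rows: "is_row r \<longleftrightarrow> r \<in> set all_rows"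
proof
  assume "is_row r"
  then obtain a b where "r = [a, b]" "a \<in> {0, 1, 2}" "b \<in> {0, 1, 2}"
    unfolding is_row_def by (auto simp: length_Suc_conv numeral_2_eq_2)
  then show "r \<in> set all_rows" unfolding all_rows_def by auto
qed (auto simp: all_rows_def is_row_def)

lemma set_A_eq: "set_A n = {A. length A = n \<and> (\<forall>r \<in> set A. is_row r) \<and> array_ok A}"
  unfolding set_A_def is_row_def by blast

lemma length_set_A: "A \<in> set_A n \<Longrightarrow> length A = n"
  by (simp add: set_A_eq)

lemma snoc_in_set_A: "B @ [r] \<in> set_A (Suc n) \<longleftrightarrow> B \<in> set_A n \<and> is_row r \<and> fits_below B r"
  by (auto simp: set_A_eq array_ok_snoc)

lemma set_A_SucE:
  assumes "A \<in> set_A (Suc n)"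
  obtains B r where "A = B @ [r]" "B \<in> set_A n" "is_row r" "fits_below B r"
  using assms length_set_A[OF assms] snoc_in_set_A by (metis length_Suc_conv_rev)

lemma finite_set_A: "finite (set_A n)"
proof (rule finite_subset)
  show "set_A n \<subseteq> {A. set A \<subseteq> set all_rows \<and> length A = n}"
    by (auto simp: set_A_eq is_row_iff_in_all_rows)
qed (simp add: finite_lists_length_eq)

lemma all_less_2: "(\<forall>j < (2::nat). P j) \<longleftrightarrow> P 0 \<and> P 1"
  by (auto simp: less_Suc_eq numeral_2_eq_2)

lemma set_A_Suc_singleton:
  assumes "set_A n = {B}" "is_row r\<^sub>0" "\<And>r. is_row r \<Longrightarrow> fits_below B r \<longleftrightarrow> r = r\<^sub>0"
  shows "set_A (Suc n) = {B @ [r\<^sub>0]}"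
proof (intro equalityI subsetI)
  fix A assume "A \<in> set_A (Suc n)"
  then show "A \<in> {B @ [r\<^sub>0]}" by (rule set_A_SucE) (use assms in auto)
qed (use assms snoc_in_set_A in auto)

lemma set_A_1: "set_A 1 = {[[0, 1]]}"
proof -
  have "set_A 0 = {[]}" by (auto simp: set_A_eq array_ok_def)
  moreover have "is_row r \<Longrightarrow> fits_below [] r \<longleftrightarrow> r = [0, 1]" for r
    by (auto simp: is_row_iff_in_all_rows all_rows_def fits_below_def cell_ok_def all_less_2)
  ultimately show ?thesis using set_A_Suc_singleton[of 0 "[]" "[0, 1]"] by (simp add: is_row_def)
qed

lemma set_A_2: "set_A 2 = {[[0, 1], [1, 0]]}"
proof -
  have "is_row r \<Longrightarrow> fits_below [[0, 1]] r \<longleftrightarrow> r = [1, 0]" for r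
    by (auto simp: is_row_iff_in_all_rows all_rows_def fits_below_def cell_ok_def all_less_2)
  then show ?thesis
    using set_A_1 set_A_Suc_singleton[of 1 "[[0, 1]]" "[1, 0]"] by (simp add: is_row_def numeral_2_eq_2)
qed

definition row_step :: "nat list \<Rightarrow> nat list \<Rightarrow> nat list \<Rightarrow> bool" where
  "row_step p q r \<longleftrightarrow> is_row r \<and> (\<forall>j < 2.
        (r ! j = 1 \<longrightarrow> (0 < j \<and> r ! (j - 1) = 0) \<or> q ! j = 0)
      \<and> (r ! j = 0 \<longrightarrow> \<not> (0 < j \<and> r ! (j - 1) = 0) \<and> q ! j \<noteq> 0)
      \<and> (r ! j = 2 \<longrightarrow> q ! j = 1 \<and> p ! j = 0))"

lemma fits_below_iff_row_step:
  "length B = n \<Longrightarrow> 2 \<le> n \<Longrightarrow>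
     is_row r \<and> fits_below B r \<longleftrightarrow> row_step (B ! (n - 2)) (B ! (n - 1)) r"
  unfolding fits_below_def row_step_def cell_ok_def by (auto simp: nth_append)

definition reachable_row_pairs :: "(nat list \<times> nat list) list" where
  "reachable_row_pairs =
     [([0,1],[1,0]), ([1,0],[0,1]), ([1,0],[2,1]), ([0,1],[1,2]), ([1,2],[0,1]),
      ([1,2],[2,0]), ([0,2],[1,0]), ([2,1],[0,1]), ([2,1],[0,2]), ([2,0],[0,1])]"

lemma reachable_row_pairs_closed:
  "(p, q) \<in> set reachable_row_pairs \<Longrightarrow> row_step p q r \<Longrightarrow> (q, r) \<in> set reachable_row_pairs"
proof -
  have "\<forall>(p, q) \<in> set reachable_row_pairs. \<forall>r \<in> set all_rows.
          row_step p q r \<longrightarrow> (q, r) \<in> set reachable_row_pairs"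
    by (simp add: reachable_row_pairs_def all_rows_def row_step_def is_row_def all_less_2)
  moreover have "row_step p q r \<Longrightarrow> r \<in> set all_rows"
    by (simp add: row_step_def is_row_iff_in_all_rows)
  ultimately show
    "(p, q) \<in> set reachable_row_pairs \<Longrightarrow> row_step p q r \<Longrightarrow> (q, r) \<in> set reachable_row_pairs"
    by blast
qed

lemma last_rows_reachable:
  "2 \<le> n \<Longrightarrow> A \<in> set_A n \<Longrightarrow> (A ! (n - 2), A ! (n - 1)) \<in> set reachable_row_pairs"
proof (induction n arbitrary: A rule: nat_induct_at_least)
  case base
  then show ?case by (simp add: set_A_2 reachable_row_pairs_def)
next
  case (Suc n)
  from Suc.prems obtain B r where A: "A = B @ [r]" and B: "B \<in> set_A n"
    and "is_row r" "fits_below B r"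
    by (rule set_A_SucE)
  moreover have "length B = n" using B by (rule length_set_A)
  ultimately have "row_step (B ! (n - 2)) (B ! (n - 1)) r"
    using fits_below_iff_row_step Suc.hyps by blast
  with Suc.IH[OF B] have "(B ! (n - 1), r) \<in> set reachable_row_pairs"
    by (rule reachable_row_pairs_closed)
  with A \<open>length B = n\<close> Suc.hyps show ?case by (simp add: nth_append)
qed

definition arrays_ending :: "nat \<Rightarrow> nat list \<Rightarrow> nat list \<Rightarrow> nat list list set" where
  "arrays_ending n p q = {A \<in> set_A n. A ! (n - 2) = p \<and> A ! (n - 1) = q}"

definition count_ending :: "nat \<Rightarrow> nat list \<Rightarrow> nat list \<Rightarrow> nat" where
  "count_ending n p q = card (arrays_ending n p q)"

lemma count_ending_eq_0:
  assumes "2 \<le> n" "(p, q) \<notin> set reachable_row_pairs"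
  shows "count_ending n p q = 0"
proof -
  have "arrays_ending n p q = {}"
    using last_rows_reachable[OF assms(1)] assms(2) by (auto simp: arrays_ending_def)
  then show ?thesis by (simp add: count_ending_def)
qed

lemma card_set_A_eq_sum_count_ending:
  assumes "2 \<le> n"
  shows "card (set_A n) = (\<Sum>(p, q) \<leftarrow> reachable_row_pairs. count_ending n p q)"
proof -
  have "set_A n = (\<Union>s \<in> set reachable_row_pairs. arrays_ending n (fst s) (snd s))"
    using last_rows_reachable[OF assms] by (fastforce simp: arrays_ending_def)
  then have "card (set_A n) = (\<Sum>s \<in> set reachable_row_pairs. count_ending n (fst s) (snd s))"
    unfolding count_ending_def
    by (simp only:) (rule card_UN_disjoint, auto simp: finite_set_A arrays_ending_def)
  also have "\<dots> = (\<Sum>(p, q) \<leftarrow> reachable_row_pairs. count_ending n p q)"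
    by (subst sum.distinct_set_conv_list) (simp_all add: reachable_row_pairs_def split_def)
  finally show ?thesis .
qed

lemma count_ending_Suc:
  assumes "2 \<le> n"
  shows "count_ending (Suc n) q r =
    (\<Sum>p \<leftarrow> all_rows. if row_step p q r then count_ending n p q else 0)"
proof -
  let ?X = "{B \<in> set_A n. B ! (n - 1) = q \<and> row_step (B ! (n - 2)) q r}"
  have "arrays_ending (Suc n) q r = (\<lambda>B. B @ [r]) ` ?X"
  proof (intro equalityI subsetI)
    fix A assume A: "A \<in> arrays_ending (Suc n) q r"
    then obtain B r' where "A = B @ [r']" "B \<in> set_A n" "is_row r'" "fits_below B r'"
      by (auto simp: arrays_ending_def elim: set_A_SucE)
    moreover from this(2) have "length B = n" by (rule length_set_A)
    ultimately show "A \<in> (\<lambda>B. B @ [r]) ` ?X"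
      using A assms fits_below_iff_row_step by (auto simp: arrays_ending_def nth_append)
  next
    fix A assume "A \<in> (\<lambda>B. B @ [r]) ` ?X"
    then obtain B where "A = B @ [r]" "B \<in> set_A n" "B ! (n - 1) = q" "row_step (B ! (n - 2)) q r"
      by auto
    moreover from this(2) have "length B = n" by (rule length_set_A)
    ultimately show "A \<in> arrays_ending (Suc n) q r"
      using assms fits_below_iff_row_step snoc_in_set_A
      by (auto simp: arrays_ending_def nth_append)
  qed
  then have "count_ending (Suc n) q r = card ?X"
    by (simp add: count_ending_def card_image inj_on_def)
  also have "?X = (\<Union>p \<in> set all_rows. if row_step p q r then arrays_ending n p q else {})"
    using assms by (auto simp: arrays_ending_def set_A_eq is_row_iff_in_all_rows[symmetric])
  also have "card \<dots> = (\<Sum>p \<in> set all_rows. if row_step p q r then count_ending n p q else 0)"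
    unfolding count_ending_def
    by (subst card_UN_disjoint) (auto simp: finite_set_A arrays_ending_def intro: sum.cong)
  also have "\<dots> = (\<Sum>p \<leftarrow> all_rows. if row_step p q r then count_ending n p q else 0)"
    by (rule sum.distinct_set_conv_list) (simp add: all_rows_def)
  finally show ?thesis .
qed

lemma count_ending_steps:
  assumes "2 \<le> n"
  shows
    "count_ending (Suc n) [0,1] [1,0] = count_ending n [1,0] [0,1] + count_ending n [1,2] [0,1]
       + count_ending n [2,0] [0,1] + count_ending n [2,1] [0,1]"
    "count_ending (Suc n) [1,0] [0,1] = count_ending n [0,1] [1,0] + count_ending n [0,2] [1,0]"
    "count_ending (Suc n) [1,0] [2,1] = count_ending n [0,1] [1,0] + count_ending n [0,2] [1,0]"
    "count_ending (Suc n) [0,1] [1,2] = count_ending n [1,0] [0,1] + count_ending n [2,0] [0,1]"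
    "count_ending (Suc n) [1,2] [0,1] = count_ending n [0,1] [1,2]"
    "count_ending (Suc n) [1,2] [2,0] = count_ending n [0,1] [1,2]"
    "count_ending (Suc n) [0,2] [1,0] = count_ending n [2,1] [0,2]"
    "count_ending (Suc n) [2,1] [0,1] = count_ending n [1,0] [2,1]"
    "count_ending (Suc n) [2,1] [0,2] = count_ending n [1,0] [2,1]"
    "count_ending (Suc n) [2,0] [0,1] = count_ending n [1,2] [2,0]"
  using assms
  by (simp_all add: count_ending_Suc all_rows_def row_step_def is_row_def all_less_2
      count_ending_eq_0 reachable_row_pairs_def)

lemma card_set_A_Suc3:
  assumes "2 \<le> n"
  shows "card (set_A (n + 3)) = card (set_A (n + 2)) + 2 * card (set_A n)"
proof -
  have n: "2 \<le> Suc n" "2 \<le> Suc (Suc n)" "2 \<le> Suc (Suc (Suc n))" using assms by simp_all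
  have "card (set_A (Suc (Suc (Suc n)))) = card (set_A (Suc (Suc n))) + 2 * card (set_A n)"
    unfolding card_set_A_eq_sum_count_ending[OF assms] card_set_A_eq_sum_count_ending[OF n(2)]
      card_set_A_eq_sum_count_ending[OF n(3)]
    by (simp only: reachable_row_pairs_def list.map sum_list_simps prod.case
        count_ending_steps[OF assms] count_ending_steps[OF n(1)] count_ending_steps[OF n(2)]) simp
  then show ?thesis by (simp add: numeral_3_eq_3 numeral_2_eq_2)
qed

lemma card_set_A_initial:
  "card (set_A 1) = 1" "card (set_A 2) = 1" "card (set_A 3) = 2" "card (set_A 4) = 4"
proof -
  have n: "2 \<le> Suc (Suc 0)" "2 \<le> Suc (Suc (Suc 0))" "2 \<le> Suc (Suc (Suc (Suc 0)))" by simp_all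
  have "arrays_ending 2 p q = (if p = [0,1] \<and> q = [1,0] then {[[0,1], [1,0]]} else {})" for p q
    by (auto simp: arrays_ending_def set_A_2)
  then have count_2:
    "count_ending (Suc (Suc 0)) p q = (if p = [0,1] \<and> q = [1,0] then 1 else 0)" for p q
    by (simp add: count_ending_def numeral_2_eq_2)
  have "card (set_A (Suc (Suc (Suc 0)))) = 2" "card (set_A (Suc (Suc (Suc (Suc 0))))) = 4"
    unfolding card_set_A_eq_sum_count_ending[OF n(2)] card_set_A_eq_sum_count_ending[OF n(3)]
    by (simp_all only: reachable_row_pairs_def list.map sum_list_simps prod.case
        count_ending_steps[OF n(1)] count_ending_steps[OF n(2)] count_2) simp_all
  then show "card (set_A 3) = 2" "card (set_A 4) = 4" by (simp_all add: eval_nat_numeral)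
  show "card (set_A 1) = 1" "card (set_A 2) = 1" using set_A_1 set_A_2 by simp_all
qed

lemma card_set_A_rec:
  "card (set_A (n + 3 + 1)) = card (set_A (n + 2 + 1)) + 2 * card (set_A (n + 1))"
proof (cases "n = 0")
  case True
  then show ?thesis using card_set_A_initial by (simp add: eval_nat_numeral)
next
  case False
  then show ?thesis using card_set_A_Suc3[of "n + 1"] by (simp add: eval_nat_numeral)
qed

lemma seq_d_eq_dragon_seq: "seq_d (n + 1) = dragon_seq n"
proof -
  have "card (set_A (n + 1)) = of_nat (dragon_seq n)"
  proof (rule dragon_seq_unique[of "\<lambda>n. card (set_A (n + 1))"])
    show "card (set_A (n + 3 + 1)) = card (set_A (n + 2 + 1)) + 2 * card (set_A (n + 1))" for n
      by (rule card_set_A_rec)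
  qed (use card_set_A_initial in \<open>simp_all add: eval_nat_numeral\<close>)
  then show ?thesis by (simp add: seq_d_def)
qed

theorem corollary1:
  fixes n :: nat
  shows "of_nat (seq_a n) = seq_b (n + 1) \<and> seq_a n = seq_c n \<and> seq_a n = seq_d (n + 1)"
  using seq_a_eq_dragon_seq seq_b_eq_dragon_seq seq_c_eq_dragon_seq seq_d_eq_dragon_seq by simp

end
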